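(* Let $V$ be a Lie superalgebra over $k$ such that for every ideal $W$ of $V$ the centre $Z(W)=\{w\in W:[w,W]=0\}$ is zero. Let $\mathcal A=\mathrm{Curr}(V)$. Then $\sigma(V)\subseteq V$ for every automorphism $\sigma$ of the $k$-conformal superalgebra $\mathcal A$ (where $V$ is identified with $1\otimes V\subseteq\mathcal A$).
   Context: Let $k$ be a field of characteristic $0$. A $k$-conformal superalgebra is a $\mathbb Z/2\mathbb Z$-graded $k$-space $\mathcal A$ with an even linear map $\partial_{\mathcal A}$ and bilinear products $a_{(n)}b$ ($n\in\mathbb Z_+$) with $a_{(n)}b=0$ for $n\gg0$, $(\partial_{\mathcal A}a)_{(n)}b=-na_{(n-1)}b$, $a_{(n)}\partial_{\mathcal A}b=\partial_{\mathcal A}(a_{(n)}b)+na_{(n-1)}b$; an automorphism is a bijective even linear map preserving all $n$-products and commuting with $\partial_{\mathcal A}$. The current conformal superalgebra of a Lie superalgebra $V$ is $\mathrm{Curr}(V)=k[\partial]\otimes_kV$, with $\partial_{\mathcal A}$ acting by multiplication by $\partial$, grading from $V$, and $n$-products determined by $v_{(0)}w=[v,w]$ and $v_{(n)}w=0$ for $n\ge1$ ($v,w\in V$), extended to all of $k[\partial]\otimes V$ via the axiom (CS1) above (equivalently $\lambda$-bracket $[p(\partial)v_\lambda q(\partial)w]=p(-\lambda)q(\partial+\lambda)[v,w]$). *)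

theory Defs
  imports Complex_Main
begin

text \<open>A Lie superalgebra over a field k is modelled on a type 'v (the whole type is V),
with scalar multiplication scale, bracket br, and a Z/2-grading V = V0 (+) V1.
Parity is encoded by a boolean (False = even, True = odd).\<close>

definition homog :: "'v set \<Rightarrow> 'v set \<Rightarrow> bool \<Rightarrow> 'v set" where
  "homog V0 V1 p = (if p then V1 else V0)"

definition ssign :: "bool \<Rightarrow> bool \<Rightarrow> 'k::field" where
  "ssign p q = (if p \<and> q then -1 else 1)"

definition lie_superalgebra ::
  "('k::field \<Rightarrow> 'v::ab_group_add \<Rightarrow> 'v) \<Rightarrow> ('v \<Rightarrow> 'v \<Rightarrow> 'v) \<Rightarrow> 'v set \<Rightarrow> 'v set \<Rightarrow> bool" where
  "lie_superalgebra scale br V0 V1 \<longleftrightarrow>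
     vector_space scale \<and>
     module.subspace scale V0 \<and> module.subspace scale V1 \<and>
     V0 \<inter> V1 = {0} \<and> (\<forall>v. \<exists>a\<in>V0. \<exists>b\<in>V1. v = a + b) \<and>
     (\<forall>a b c. br (a + b) c = br a c + br b c) \<and>
     (\<forall>a b c. br a (b + c) = br a b + br a c) \<and>
     (\<forall>r a b. br (scale r a) b = scale r (br a b)) \<and>
     (\<forall>r a b. br a (scale r b) = scale r (br a b)) \<and>
     (\<forall>p q a b. a \<in> homog V0 V1 p \<longrightarrow> b \<in> homog V0 V1 q \<longrightarrow>
        br a b \<in> homog V0 V1 (p \<noteq> q)) \<and>
     (\<forall>p q a b. a \<in> homog V0 V1 p \<longrightarrow> b \<in> homog V0 V1 q \<longrightarrow>
        br a b = - scale (ssign p q) (br b a)) \<and>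
     (\<forall>p q a b c. a \<in> homog V0 V1 p \<longrightarrow> b \<in> homog V0 V1 q \<longrightarrow>
        br a (br b c) = br (br a b) c + scale (ssign p q) (br b (br a c)))"

definition super_ideal ::
  "('k::field \<Rightarrow> 'v::ab_group_add \<Rightarrow> 'v) \<Rightarrow> ('v \<Rightarrow> 'v \<Rightarrow> 'v) \<Rightarrow> 'v set \<Rightarrow> 'v set \<Rightarrow> 'v set \<Rightarrow> bool" where
  "super_ideal scale br V0 V1 W \<longleftrightarrow>
     module.subspace scale W \<and>
     (\<forall>w\<in>W. \<exists>a\<in>W \<inter> V0. \<exists>b\<in>W \<inter> V1. w = a + b) \<and>
     (\<forall>v. \<forall>w\<in>W. br v w \<in> W)"

definition centre :: "('v \<Rightarrow> 'v \<Rightarrow> 'v::zero) \<Rightarrow> 'v set \<Rightarrow> 'v set" where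
  "centre br W = {w \<in> W. \<forall>u\<in>W. br w u = 0}"

text \<open>The current conformal superalgebra Curr(V) = k[\<partial>] \<otimes> V: an element
  \<Sum>i \<partial>^i \<otimes> f i is represented by its finitely supported coefficient sequence f.\<close>

definition curr_carrier :: "(nat \<Rightarrow> 'v::zero) set" where
  "curr_carrier = {f. finite {i. f i \<noteq> 0}}"

definition curr_part :: "'v::zero set \<Rightarrow> (nat \<Rightarrow> 'v) set" where
  "curr_part S = {f \<in> curr_carrier. \<forall>i. f i \<in> S}"

definition curr_emb :: "'v::zero \<Rightarrow> nat \<Rightarrow> 'v" where
  "curr_emb v = (\<lambda>i. if i = 0 then v else 0)"

definition curr_D :: "(nat \<Rightarrow> 'v::zero) \<Rightarrow> nat \<Rightarrow> 'v" where
  "curr_D f = (\<lambda>i. case i of 0 \<Rightarrow> 0 | Suc j \<Rightarrow> f j)"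

definition curr_scale :: "('k \<Rightarrow> 'v \<Rightarrow> 'v) \<Rightarrow> 'k \<Rightarrow> (nat \<Rightarrow> 'v) \<Rightarrow> nat \<Rightarrow> 'v" where
  "curr_scale scale c f = (\<lambda>i. scale c (f i))"

text \<open>n-th products, from the lambda-bracket
  [p(\<partial>)v_\<lambda> q(\<partial>)w] = p(-\<lambda>) q(\<partial>+\<lambda>) [v,w] = \<Sum>n \<lambda>^n/n! a_(n) b.
  For a = \<partial>^p v, b = \<partial>^q w this gives
  a_(n) b = n! (-1)^p (q choose (n-p)) \<partial>^(p+q-n) [v,w]  (zero unless p \<le> n \<le> p+q).
  Collecting the coefficient of \<partial>^m (so q = m+n-p):\<close>
definition curr_nprod ::
  "('k::field \<Rightarrow> 'v::ab_group_add \<Rightarrow> 'v) \<Rightarrow> ('v \<Rightarrow> 'v \<Rightarrow> 'v) \<Rightarrow> nat \<Rightarrow>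
   (nat \<Rightarrow> 'v) \<Rightarrow> (nat \<Rightarrow> 'v) \<Rightarrow> nat \<Rightarrow> 'v" where
  "curr_nprod scale br n f g = (\<lambda>m.
     \<Sum>p\<le>n. scale ((-1) ^ p * of_nat (fact n * ((m + n - p) choose (n - p))))
                   (br (f p) (g (m + n - p))))"

definition curr_automorphism ::
  "('k::field \<Rightarrow> 'v::ab_group_add \<Rightarrow> 'v) \<Rightarrow> ('v \<Rightarrow> 'v \<Rightarrow> 'v) \<Rightarrow> 'v set \<Rightarrow> 'v set \<Rightarrow>
   ((nat \<Rightarrow> 'v) \<Rightarrow> (nat \<Rightarrow> 'v)) \<Rightarrow> bool" where
  "curr_automorphism scale br V0 V1 \<sigma> \<longleftrightarrow>
     bij_betw \<sigma> curr_carrier curr_carrier \<and>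
     (\<forall>f\<in>curr_carrier. \<forall>g\<in>curr_carrier. \<sigma> (\<lambda>i. f i + g i) = (\<lambda>i. \<sigma> f i + \<sigma> g i)) \<and>
     (\<forall>c. \<forall>f\<in>curr_carrier. \<sigma> (curr_scale scale c f) = curr_scale scale c (\<sigma> f)) \<and>
     (\<forall>f\<in>curr_part V0. \<sigma> f \<in> curr_part V0) \<and>
     (\<forall>f\<in>curr_part V1. \<sigma> f \<in> curr_part V1) \<and>
     (\<forall>f\<in>curr_carrier. \<sigma> (curr_D f) = curr_D (\<sigma> f)) \<and>
     (\<forall>n. \<forall>f\<in>curr_carrier. \<forall>g\<in>curr_carrier.
        \<sigma> (curr_nprod scale br n f g) = curr_nprod scale br n (\<sigma> f) (\<sigma> g))"

end

theory Submission
  imports Defs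
begin

(* Write sigma(1 (x) v) = sum_i d^i (x) phi_i(v).  Each phi_i is an even linear map of V,
   phi_0 is onto (every element of Curr(V) is 1 (x) v0 + d f), and preservation of the
   0- and 1-products of 1 (x) v, 1 (x) w gives
     (P0)  phi_m [v,w] = [phi_0 v, phi_m w],
     (P1)  [phi_1 v, phi_m w] = (m+1) phi_(m+1) [v,w].
   The argument only uses these relations.  Two ideals with zero mutual bracket meet
   trivially (their intersection is abelian, hence its own centre).  This is applied to
   range phi_j against V, showing that phi_j vanishes once it kills all brackets, and to
   range phi_1 against phi_0(ker phi_1), showing that phi_k [v,w] = 0 whenever
   phi_(k+1) [v,w] = 0 (k >= 1).  Finiteness of the support and downward induction then
   give phi_k = 0 for all k >= 1, i.e. sigma(1 (x) v) = 1 (x) phi_0(v). *)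

locale lie_super =
  fixes scale :: "'k::field_char_0 \<Rightarrow> 'v::ab_group_add \<Rightarrow> 'v"
    and br :: "'v \<Rightarrow> 'v \<Rightarrow> 'v"
    and V0 V1 :: "'v set"
  assumes lie: "lie_superalgebra scale br V0 V1"
begin

sublocale vector_space scale
  using lie unfolding lie_superalgebra_def by auto

lemma
  shows even_subspace: "subspace V0"
    and odd_subspace: "subspace V1"
    and even_odd_Int: "V0 \<inter> V1 = {0}"
    and parity_decomp: "\<exists>a\<in>V0. \<exists>b\<in>V1. v = a + b"
    and br_add_left: "br (a + b) c = br a c + br b c"
    and br_add_right: "br a (b + c) = br a b + br a c"
  using lie unfolding lie_superalgebra_def by auto

lemma br_zero_left [simp]: "br 0 c = 0"
  using br_add_left[of 0 0 c] by simp

lemma br_zero_right [simp]: "br c 0 = 0"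
  using br_add_right[of c 0 0] by simp

lemma parity_decomp_unique:
  assumes "a \<in> V0" "b \<in> V1" "a' \<in> V0" "b' \<in> V1" and sum_eq: "a + b = a' + b'"
  shows "a = a' \<and> b = b'"
proof -
  have "a - a' = b' - b" using sum_eq by (simp add: algebra_simps)
  moreover have "a - a' \<in> V0" using even_subspace assms subspace_diff by blast
  moreover have "b' - b \<in> V1" using odd_subspace assms subspace_diff by blast
  ultimately have "a - a' = 0" using even_odd_Int by (metis IntI singletonD)
  with sum_eq show ?thesis by simp
qed

definition graded :: "'v set \<Rightarrow> bool" where
  "graded W \<longleftrightarrow> subspace W \<and> (\<forall>w\<in>W. \<exists>a\<in>W \<inter> V0. \<exists>b\<in>W \<inter> V1. w = a + b)"

lemma super_ideal_iff:
  "super_ideal scale br V0 V1 W \<longleftrightarrow> graded W \<and> (\<forall>v. \<forall>w\<in>W. br v w \<in> W)"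
  unfolding super_ideal_def graded_def by blast

lemma graded_UNIV: "graded UNIV"
  unfolding graded_def using parity_decomp by simp

text \<open>Graded subspaces are closed under intersection, by uniqueness of the decomposition.\<close>

lemma graded_Int:
  assumes "graded I" "graded J"
  shows "graded (I \<inter> J)"
  unfolding graded_def
proof (intro conjI ballI)
  show "subspace (I \<inter> J)" using assms subspace_inter unfolding graded_def by blast
next
  fix w assume "w \<in> I \<inter> J"
  then obtain a b a' b' where
    I_parts: "a \<in> I \<inter> V0" "b \<in> I \<inter> V1" "w = a + b" and
    J_parts: "a' \<in> J \<inter> V0" "b' \<in> J \<inter> V1" "w = a' + b'"
    using assms unfolding graded_def by blast
  then have "a = a' \<and> b = b'" using parity_decomp_unique[of a b a' b'] by auto
  with I_parts J_parts show "\<exists>a\<in>(I \<inter> J) \<inter> V0. \<exists>b\<in>(I \<inter> J) \<inter> V1. w = a + b" by blast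
qed

definition even_linear :: "('v \<Rightarrow> 'v) \<Rightarrow> bool" where
  "even_linear f \<longleftrightarrow> (\<forall>x y. f (x + y) = f x + f y) \<and> (\<forall>c x. f (scale c x) = scale c (f x)) \<and>
     f ` V0 \<subseteq> V0 \<and> f ` V1 \<subseteq> V1"

lemma even_linear_module_hom: "even_linear f \<Longrightarrow> module_hom scale scale f"
  unfolding even_linear_def module_hom_def module_hom_axioms_def
  using module_axioms by simp

lemma graded_image:
  assumes f: "even_linear f" and S: "graded S"
  shows "graded (f ` S)"
  unfolding graded_def
proof (intro conjI ballI)
  show "subspace (f ` S)"
    using module_hom.subspace_image[OF even_linear_module_hom[OF f]] S unfolding graded_def by blast
next
  fix y assume "y \<in> f ` S"
  then obtain x a b where "x \<in> S" "y = f x" "a \<in> S \<inter> V0" "b \<in> S \<inter> V1" "x = a + b"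
    using S unfolding graded_def by blast
  with f show "\<exists>a\<in>f ` S \<inter> V0. \<exists>b\<in>f ` S \<inter> V1. y = a + b"
    unfolding even_linear_def by blast
qed

lemma graded_kernel:
  assumes f: "even_linear f"
  shows "graded {x. f x = 0}"
  unfolding graded_def
proof (intro conjI ballI)
  show "subspace {x. f x = 0}"
    using module_hom.subspace_kernel[OF even_linear_module_hom[OF f]] .
next
  fix x assume "x \<in> {x. f x = 0}"
  obtain a b where ab: "a \<in> V0" "b \<in> V1" "x = a + b" using parity_decomp by blast
  have "f a + f b = 0 + 0" "f a \<in> V0" "f b \<in> V1"
    using f ab \<open>x \<in> {x. f x = 0}\<close> unfolding even_linear_def by auto
  then have "f a = 0 \<and> f b = 0"
    using parity_decomp_unique subspace_0[OF even_subspace] subspace_0[OF odd_subspace] by blast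
  with ab show "\<exists>a\<in>{x. f x = 0} \<inter> V0. \<exists>b\<in>{x. f x = 0} \<inter> V1. x = a + b" by blast
qed

end

locale centreless_lie_super = lie_super +
  assumes centre_free: "\<And>W. super_ideal scale br V0 V1 W \<Longrightarrow> centre br W = {0}"
begin

text \<open>Two ideals whose mutual brackets vanish intersect trivially: their intersection is an
  ideal equal to its own centre.\<close>

lemma commuting_ideals_disjoint:
  assumes I: "super_ideal scale br V0 V1 I" and J: "super_ideal scale br V0 V1 J"
    and commute: "\<And>x y. x \<in> I \<Longrightarrow> y \<in> J \<Longrightarrow> br x y = 0"
  shows "I \<inter> J = {0}"
proof -
  have "super_ideal scale br V0 V1 (I \<inter> J)"
    using I J graded_Int unfolding super_ideal_iff by blast
  moreover have "centre br (I \<inter> J) = I \<inter> J"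
    using commute unfolding centre_def by blast
  ultimately show ?thesis using centre_free by simp
qed

end

text \<open>Abstract coefficient maps: \<open>\<phi> i v\<close> plays the role of the coefficient of \<open>\<partial>^i\<close> in
  \<open>\<sigma> (1 \<otimes> v)\<close>, subject to the relations (P0) and (P1) coming from the 0- and 1-products.\<close>

locale coefficient_maps = centreless_lie_super scale br V0 V1
  for scale :: "'k::field_char_0 \<Rightarrow> 'v::ab_group_add \<Rightarrow> 'v" and br V0 V1 +
  fixes \<phi> :: "nat \<Rightarrow> 'v \<Rightarrow> 'v"
  assumes phi_even_linear: "\<And>i. even_linear (\<phi> i)"
    and phi_finite: "\<And>x. finite {i. \<phi> i x \<noteq> 0}"
    and phi0_surj: "surj (\<phi> 0)"
    and phi_product0: "\<And>m v w. \<phi> m (br v w) = br (\<phi> 0 v) (\<phi> m w)"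
    and phi_product1: "\<And>m v w. br (\<phi> 1 v) (\<phi> m w) = scale (of_nat (Suc m)) (\<phi> (Suc m) (br v w))"
begin

lemma phi_scale: "\<phi> i (scale c x) = scale c (\<phi> i x)"
  using phi_even_linear[of i] unfolding even_linear_def by simp

lemma phi0_preimage: obtains x where "\<phi> 0 x = u"
  using phi0_surj by (metis surjD)

text \<open>By (P0) and surjectivity of \<open>\<phi> 0\<close>, every \<open>range (\<phi> j)\<close> is an ideal.\<close>

lemma range_phi_ideal: "super_ideal scale br V0 V1 (range (\<phi> j))"
  unfolding super_ideal_iff
proof (intro conjI allI ballI)
  show "graded (range (\<phi> j))" using graded_image[OF phi_even_linear graded_UNIV] .
next
  fix v w assume "w \<in> range (\<phi> j)"
  then obtain x where "w = \<phi> j x" by blast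
  moreover obtain v' where "\<phi> 0 v' = v" by (rule phi0_preimage)
  ultimately have "br v w = \<phi> j (br v' x)" using phi_product0 by simp
  then show "br v w \<in> range (\<phi> j)" by simp
qed

lemma kernel_image_ideal: "super_ideal scale br V0 V1 (\<phi> 0 ` {t. \<phi> 1 t = 0})"
  unfolding super_ideal_iff
proof (intro conjI allI ballI)
  show "graded (\<phi> 0 ` {t. \<phi> 1 t = 0})"
    using graded_image[OF phi_even_linear graded_kernel[OF phi_even_linear]] .
next
  fix v w assume "w \<in> \<phi> 0 ` {t. \<phi> 1 t = 0}"
  then obtain t where t: "w = \<phi> 0 t" "\<phi> 1 t = 0" by blast
  obtain v' where v': "\<phi> 0 v' = v" by (rule phi0_preimage)
  have "br v w = \<phi> 0 (br v' t)" using phi_product0[of 0 v' t] t v' by simp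
  moreover have "\<phi> 1 (br v' t) = 0" using phi_product0[of 1 v' t] t by simp
  ultimately show "br v w \<in> \<phi> 0 ` {t. \<phi> 1 t = 0}" by blast
qed

text \<open>The two ideals above commute: \<open>[\<phi> 0 t, \<phi> 1 s] = \<phi> 1 [t, s] = [\<phi> 1 t, \<phi> 0 s]\<close>
  by (P0) and (P1) with \<open>m = 0\<close>.\<close>

lemma kernel_image_commutes_with_range_phi1:
  assumes "x \<in> \<phi> 0 ` {t. \<phi> 1 t = 0}" "y \<in> range (\<phi> 1)"
  shows "br x y = 0"
proof -
  obtain t s where "x = \<phi> 0 t" "\<phi> 1 t = 0" "y = \<phi> 1 s" using assms by blast
  then have "br x y = \<phi> 1 (br t s)" using phi_product0[of 1 t s] by simp
  also have "\<dots> = br (\<phi> 1 t) (\<phi> 0 s)" using phi_product1[of t 0 s] by simp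
  finally show ?thesis using \<open>\<phi> 1 t = 0\<close> by simp
qed

text \<open>If \<open>\<phi> j\<close> kills all brackets then \<open>range (\<phi> j)\<close> commutes with \<open>V = range (\<phi> 0)\<close>,
  so it is zero.\<close>

lemma phi_vanishes_if_brackets_vanish:
  assumes "\<And>x y. \<phi> j (br x y) = 0"
  shows "\<phi> j x = 0"
proof -
  have "UNIV \<inter> range (\<phi> j) = {0}"
  proof (rule commuting_ideals_disjoint)
    show "super_ideal scale br V0 V1 UNIV"
      unfolding super_ideal_iff using graded_UNIV by simp
    show "super_ideal scale br V0 V1 (range (\<phi> j))" by (rule range_phi_ideal)
    fix x y assume "y \<in> range (\<phi> j)"
    then obtain s where "y = \<phi> j s" by blast
    moreover obtain x' where "\<phi> 0 x' = x" by (rule phi0_preimage)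
    ultimately show "br x y = 0" using phi_product0[of j x' s] assms by simp
  qed
  then show ?thesis by auto
qed

text \<open>Descent step: for \<open>k \<ge> 1\<close>, if \<open>\<phi> (k+1) [v,w] = 0\<close> then \<open>\<phi> k [v,w]\<close> lies both in
  \<open>\<phi> 0 ` ker (\<phi> 1)\<close> (by (P0), (P1)) and in \<open>range (\<phi> 1)\<close> (by (P1), dividing by \<open>k\<close>), hence
  vanishes.\<close>

lemma bracket_coefficient_step:
  assumes k: "k \<ge> 1" and next_zero: "\<phi> (Suc k) (br v w) = 0"
  shows "\<phi> k (br v w) = 0"
proof -
  define u where "u = \<phi> k (br v w)"
  obtain w' where w': "\<phi> 0 w' = \<phi> k w" by (rule phi0_preimage)
  obtain w'' where w'': "\<phi> 0 w'' = \<phi> (k - 1) w" by (rule phi0_preimage)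
  have "u = \<phi> 0 (br v w')"
    unfolding u_def using phi_product0[of k v w] phi_product0[of 0 v w'] w' by simp
  moreover have "\<phi> 1 (br v w') = 0"
    using phi_product1[of v 0 w'] phi_product1[of v k w] w' next_zero by simp
  ultimately have u_kernel_image: "u \<in> \<phi> 0 ` {t. \<phi> 1 t = 0}" by blast
  have scaled_u: "scale (of_nat k) u = \<phi> 1 (br v w'')"
    using phi_product1[of v "k - 1" w] phi_product1[of v 0 w''] w'' k unfolding u_def by simp
  have "\<phi> 1 (scale (inverse (of_nat k)) (br v w'')) = scale (inverse (of_nat k)) (scale (of_nat k) u)"
    by (simp only: phi_scale scaled_u)
  also have "\<dots> = scale (inverse (of_nat k) * of_nat k) u" by simp
  also have "\<dots> = u" using k by simp
  finally have "u \<in> range (\<phi> 1)" by (metis rangeI)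
  with u_kernel_image show ?thesis
    using commuting_ideals_disjoint[OF kernel_image_ideal range_phi_ideal
        kernel_image_commutes_with_range_phi1]
    unfolding u_def by blast
qed

text \<open>Downward induction from beyond the (finite) support of \<open>i \<mapsto> \<phi> i [v,w]\<close>.\<close>

lemma bracket_coefficients_vanish:
  assumes k: "k \<ge> 1"
  shows "\<phi> k (br v w) = 0"
proof -
  obtain N where N: "\<And>n. n \<ge> N \<Longrightarrow> \<phi> n (br v w) = 0"
    using phi_finite[of "br v w"] by (metis (mono_tags) finite_nat_set_iff_bounded_le
        mem_Collect_eq not_less_eq_eq)
  have "k \<le> max N k" by simp
  then show ?thesis
  proof (induction rule: inc_induct)
    case base
    show ?case by (rule N) simp
  next
    case (step n)
    then show ?case using bracket_coefficient_step k by simp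
  qed
qed

theorem higher_coefficients_vanish: "k \<ge> 1 \<Longrightarrow> \<phi> k x = 0"
  using phi_vanishes_if_brackets_vanish bracket_coefficients_vanish by blast

end

lemma curr_emb_carrier: "curr_emb v \<in> curr_carrier"
proof -
  have "{i. curr_emb v i \<noteq> 0} \<subseteq> {0}" unfolding curr_emb_def by auto
  then show ?thesis unfolding curr_carrier_def by (auto intro: finite_subset)
qed

lemma curr_zero_carrier: "(\<lambda>_. 0) \<in> curr_carrier"
  unfolding curr_carrier_def by simp

lemma curr_shift_carrier:
  assumes "f \<in> curr_carrier"
  shows "(\<lambda>i. f (Suc i)) \<in> curr_carrier"
proof -
  have "finite (Suc -` {i. f i \<noteq> 0})"
    using assms finite_vimageI inj_Suc unfolding curr_carrier_def by blast
  then show ?thesis unfolding curr_carrier_def by (simp add: vimage_def)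
qed

lemma curr_D_carrier:
  assumes "f \<in> curr_carrier"
  shows "curr_D f \<in> curr_carrier"
proof -
  have "{i. curr_D f i \<noteq> 0} \<subseteq> Suc ` {i. f i \<noteq> 0}"
  proof
    fix i assume "i \<in> {i. curr_D f i \<noteq> 0}"
    then show "i \<in> Suc ` {i. f i \<noteq> 0}" by (cases i) (auto simp: curr_D_def)
  qed
  then show ?thesis using assms unfolding curr_carrier_def by (auto intro: finite_subset)
qed

lemma curr_split:
  fixes f :: "nat \<Rightarrow> 'v::monoid_add"
  shows "f = (\<lambda>i. curr_emb (f 0) i + curr_D (\<lambda>i. f (Suc i)) i)"
  unfolding curr_emb_def curr_D_def by (rule ext) (simp split: nat.splits)

lemma curr_emb_add:
  fixes x y :: "'v::monoid_add"
  shows "curr_emb (x + y) = (\<lambda>i. curr_emb x i + curr_emb y i)"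
  unfolding curr_emb_def by auto

context lie_super
begin

lemma curr_emb_scale: "curr_emb (scale c x) = curr_scale scale c (curr_emb x)"
  unfolding curr_emb_def curr_scale_def by auto

lemma curr_nprod_0: "curr_nprod scale br 0 f g m = br (f 0) (g m)"
  unfolding curr_nprod_def by simp

lemma curr_nprod_1:
  "curr_nprod scale br 1 f g m =
     scale (of_nat (Suc m)) (br (f 0) (g (Suc m))) - br (f 1) (g m)"
  unfolding curr_nprod_def by (simp add: atMost_Suc scale_minus_left)

lemma curr_nprod_emb:
  "curr_nprod scale br n (curr_emb v) (curr_emb w) =
     (if n = 0 then curr_emb (br v w) else (\<lambda>_. 0))"
proof
  fix m
  define T where "T p = scale ((-1) ^ p * of_nat (fact n * ((m + n - p) choose (n - p))))
                   (br (curr_emb v p) (curr_emb w (m + n - p)))" for p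
  have "curr_nprod scale br n (curr_emb v) (curr_emb w) m = sum T {..n}"
    unfolding curr_nprod_def T_def by simp
  also have "\<dots> = T 0 + sum T ({..n} - {0})" by (rule sum.remove) auto
  also have "sum T ({..n} - {0}) = 0" by (rule sum.neutral) (auto simp: T_def curr_emb_def)
  also have "T 0 = scale (of_nat (fact n * ((m + n) choose n))) (br v (curr_emb w (m + n)))"
    unfolding T_def by (simp add: curr_emb_def)
  finally show "curr_nprod scale br n (curr_emb v) (curr_emb w) m =
      (if n = 0 then curr_emb (br v w) else (\<lambda>_. 0)) m"
    by (cases "m + n = 0") (auto simp: curr_emb_def)
qed

end

locale curr_aut = lie_super scale br V0 V1
  for scale :: "'k::field_char_0 \<Rightarrow> 'v::ab_group_add \<Rightarrow> 'v" and br V0 V1 +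
  fixes \<sigma> :: "(nat \<Rightarrow> 'v) \<Rightarrow> nat \<Rightarrow> 'v"
  assumes aut: "curr_automorphism scale br V0 V1 \<sigma>"
begin

lemma
  shows aut_bij: "bij_betw \<sigma> curr_carrier curr_carrier"
    and aut_add: "f \<in> curr_carrier \<Longrightarrow> g \<in> curr_carrier \<Longrightarrow>
      \<sigma> (\<lambda>i. f i + g i) = (\<lambda>i. \<sigma> f i + \<sigma> g i)"
    and aut_scale: "f \<in> curr_carrier \<Longrightarrow> \<sigma> (curr_scale scale c f) = curr_scale scale c (\<sigma> f)"
    and aut_even: "f \<in> curr_part V0 \<Longrightarrow> \<sigma> f \<in> curr_part V0"
    and aut_odd: "f \<in> curr_part V1 \<Longrightarrow> \<sigma> f \<in> curr_part V1"
    and aut_D: "f \<in> curr_carrier \<Longrightarrow> \<sigma> (curr_D f) = curr_D (\<sigma> f)"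
    and aut_nprod: "f \<in> curr_carrier \<Longrightarrow> g \<in> curr_carrier \<Longrightarrow>
      \<sigma> (curr_nprod scale br n f g) = curr_nprod scale br n (\<sigma> f) (\<sigma> g)"
  using aut unfolding curr_automorphism_def by simp_all

lemma aut_zero: "\<sigma> (\<lambda>_. 0) = (\<lambda>_. 0)"
proof -
  have "\<sigma> (\<lambda>_. 0) = \<sigma> (\<lambda>i. (\<lambda>_. 0) i + (\<lambda>_. 0) i)" by simp
  also have "\<dots> = (\<lambda>i. \<sigma> (\<lambda>_. 0) i + \<sigma> (\<lambda>_. 0) i)"
    using aut_add curr_zero_carrier by blast
  finally show ?thesis by (simp add: fun_eq_iff)
qed

lemma coeff_even_linear: "even_linear (\<lambda>v. \<sigma> (curr_emb v) i)"
proof -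
  have parity: "\<sigma> (curr_emb x) i \<in> U"
    if "x \<in> U" "subspace U" "\<And>f. f \<in> curr_part U \<Longrightarrow> \<sigma> f \<in> curr_part U" for x U
  proof -
    have "curr_emb x \<in> curr_part U"
      using that curr_emb_carrier subspace_0 unfolding curr_part_def curr_emb_def by auto
    then show ?thesis using that(3) unfolding curr_part_def by blast
  qed
  show ?thesis
    unfolding even_linear_def
    using aut_add[OF curr_emb_carrier curr_emb_carrier] aut_scale[OF curr_emb_carrier]
      parity[OF _ even_subspace aut_even] parity[OF _ odd_subspace aut_odd]
    by (auto simp: curr_emb_add curr_emb_scale curr_scale_def)
qed

lemma coeff_finite: "finite {i. \<sigma> (curr_emb x) i \<noteq> 0}"
  using bij_betwE[OF aut_bij] curr_emb_carrier unfolding curr_carrier_def by blast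

text \<open>Surjectivity of the 0-th coefficient: if \<open>\<sigma> h = 1 \<otimes> u\<close>, write \<open>h = 1 \<otimes> h\<^sub>0 + \<partial> g\<close>;
  as \<open>\<sigma>\<close> commutes with \<open>\<partial>\<close>, the constant coefficient of \<open>\<sigma> (1 \<otimes> h\<^sub>0)\<close> is \<open>u\<close>.\<close>

lemma coeff0_surj: "surj (\<lambda>v. \<sigma> (curr_emb v) 0)"
proof -
  have "u \<in> range (\<lambda>v. \<sigma> (curr_emb v) 0)" for u
  proof -
    obtain h where h: "h \<in> curr_carrier" "\<sigma> h = curr_emb u"
      using bij_betw_imp_surj_on[OF aut_bij] curr_emb_carrier by (metis imageE)
    have shift: "(\<lambda>i. h (Suc i)) \<in> curr_carrier" using h(1) by (rule curr_shift_carrier)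
    have "\<sigma> h = (\<lambda>i. \<sigma> (curr_emb (h 0)) i + \<sigma> (curr_D (\<lambda>i. h (Suc i))) i)"
      using curr_split[of h] aut_add[OF curr_emb_carrier curr_D_carrier[OF shift]] by metis
    then have "\<sigma> h 0 = \<sigma> (curr_emb (h 0)) 0"
      using aut_D[OF shift] by (simp add: curr_D_def)
    with h(2) have "\<sigma> (curr_emb (h 0)) 0 = u" by (simp add: curr_emb_def)
    then show ?thesis by (metis rangeI)
  qed
  then show ?thesis by blast
qed

text \<open>Relation (P0), from preservation of the 0-product.\<close>

lemma coeff_product0: "\<sigma> (curr_emb (br v w)) m = br (\<sigma> (curr_emb v) 0) (\<sigma> (curr_emb w) m)"
  using aut_nprod[OF curr_emb_carrier curr_emb_carrier, of 0 v w]
  by (simp add: curr_nprod_emb curr_nprod_0)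

text \<open>Relation (P1), from preservation of the (vanishing) 1-product, combined with (P0).\<close>

lemma coeff_product1:
  "br (\<sigma> (curr_emb v) 1) (\<sigma> (curr_emb w) m) =
     scale (of_nat (Suc m)) (\<sigma> (curr_emb (br v w)) (Suc m))"
proof -
  have "(\<lambda>_. 0) = curr_nprod scale br 1 (\<sigma> (curr_emb v)) (\<sigma> (curr_emb w))"
    using aut_nprod[OF curr_emb_carrier curr_emb_carrier, of 1 v w] aut_zero
    by (simp add: curr_nprod_emb)
  then have "0 = scale (of_nat (Suc m)) (br (\<sigma> (curr_emb v) 0) (\<sigma> (curr_emb w) (Suc m)))
      - br (\<sigma> (curr_emb v) 1) (\<sigma> (curr_emb w) m)"
    by (metis curr_nprod_1)
  then show ?thesis by (simp add: coeff_product0)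
qed

end

locale centreless_curr_aut = curr_aut + centreless_lie_super scale br V0 V1
begin

sublocale coefficient_maps scale br V0 V1 "\<lambda>i v. \<sigma> (curr_emb v) i"
  using coeff_even_linear coeff_finite coeff0_surj coeff_product0 coeff_product1
  by unfold_locales simp_all

lemma aut_preserves_embedding: "\<sigma> (curr_emb v) = curr_emb (\<sigma> (curr_emb v) 0)"
proof
  fix i show "\<sigma> (curr_emb v) i = curr_emb (\<sigma> (curr_emb v) 0) i"
    using higher_coefficients_vanish[of i v] by (cases i) (simp_all add: curr_emb_def)
qed

end

theorem mainTheorem12:
  fixes scale :: "'k::field_char_0 \<Rightarrow> 'v::ab_group_add \<Rightarrow> 'v"
    and br :: "'v \<Rightarrow> 'v \<Rightarrow> 'v"
    and V0 V1 :: "'v set"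
    and \<sigma> :: "(nat \<Rightarrow> 'v) \<Rightarrow> (nat \<Rightarrow> 'v)"
  assumes "lie_superalgebra scale br V0 V1"
    and "\<forall>W. super_ideal scale br V0 V1 W \<longrightarrow> centre br W = {0}"
    and "curr_automorphism scale br V0 V1 \<sigma>"
  shows "\<forall>v. \<sigma> (curr_emb v) \<in> range curr_emb"
proof -
  interpret centreless_curr_aut scale br V0 V1 \<sigma>
    using assms by unfold_locales (simp_all add: lie_super_def)
  show ?thesis using aut_preserves_embedding by (metis rangeI)
qed

end
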